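(* Assume every node of $G$ belongs to at least one $h$-clique. Let $f^*$ be any maximum flow in $\mathcal{H}$. Then in the residual graph $\mathcal{H}_{f^*}$ there is a directed path from $t$ to every node $v\in V$.
   Context: Let $G=(V,E)$ be a finite simple undirected graph and $h\ge2$. An $h$-clique is a set of $h$ pairwise adjacent nodes; $\mu_h(G[W])$ counts $h$-cliques inside $W$; for nonempty $W$, $\rho_h(W)=\mu_h(G[W])/|W|$; $\rho_h^*=\max_{\emptyset\ne W\subseteq V}\rho_h(W)$; $deg_G(v,h)$ is the number of $h$-cliques containing $v$; $\Lambda$ is the set of $(h-1)$-cliques of $G$ contained in some $h$-clique. Flow network $\mathcal{H}=(V_\mathcal{H},E_\mathcal{H},c)$: $V_\mathcal{H}=V\cup\Lambda\cup\{s,t\}$; for $v\in V$: arcs $(s,v)$ cap. $deg_G(v,h)$, $(v,t)$ cap. $h\rho_h^*$, $(v,s),(t,v)$ cap. $0$; for $\lambda\in\Lambda$, $v\in\lambda$: $(\lambda,v)$ cap. $+\infty$, $(v,\lambda)$ cap. $0$; for $\lambda\in\Lambda$, $v\in V$ with $\lambda\cup\{v\}$ an $h$-clique: $(v,\lambda)$ cap. $1$, $(\lambda,v)$ cap. $0$; no other arcs. A flow $f$ satisfies $f(u,v)\le c(u,v)$, $f(v,u)=-f(u,v)$, conservation at nodes other than $s,t$; value $\sum_v f(s,v)$. The residual graph $\mathcal{H}_{f}$ has an arc $(u,v)$ whenever $(u,v)\in E_\mathcal{H}$ and $c(u,v)-f(u,v)>0$. *)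

theory Defs
  imports "HOL-Library.Extended_Real"
begin

text \<open>Simple graph: finite vertex set V, adjacency relation adj (assumed symmetric and
irreflexive in the theorem). An h-clique of G[W] is a set of h pairwise adjacent nodes of W.\<close>

definition is_clique :: "('a \<Rightarrow> 'a \<Rightarrow> bool) \<Rightarrow> 'a set \<Rightarrow> nat \<Rightarrow> 'a set \<Rightarrow> bool" where
  "is_clique adj W h K \<longleftrightarrow> K \<subseteq> W \<and> finite K \<and> card K = h \<and>
     (\<forall>x\<in>K. \<forall>y\<in>K. x \<noteq> y \<longrightarrow> adj x y)"

definition mu :: "('a \<Rightarrow> 'a \<Rightarrow> bool) \<Rightarrow> nat \<Rightarrow> 'a set \<Rightarrow> nat" where
  "mu adj h W = card {K. is_clique adj W h K}"

definition rho :: "('a \<Rightarrow> 'a \<Rightarrow> bool) \<Rightarrow> nat \<Rightarrow> 'a set \<Rightarrow> real" where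
  "rho adj h W = real (mu adj h W) / real (card W)"

definition rho_star :: "('a \<Rightarrow> 'a \<Rightarrow> bool) \<Rightarrow> 'a set \<Rightarrow> nat \<Rightarrow> real" where
  "rho_star adj V h = Max {rho adj h W | W. W \<subseteq> V \<and> W \<noteq> {}}"

definition clique_deg :: "('a \<Rightarrow> 'a \<Rightarrow> bool) \<Rightarrow> 'a set \<Rightarrow> nat \<Rightarrow> 'a \<Rightarrow> nat" where
  "clique_deg adj V h v = card {K. is_clique adj V h K \<and> v \<in> K}"

definition Lambda :: "('a \<Rightarrow> 'a \<Rightarrow> bool) \<Rightarrow> 'a set \<Rightarrow> nat \<Rightarrow> 'a set set" where
  "Lambda adj V h = {L. is_clique adj V (h - 1) L \<and> (\<exists>K. is_clique adj V h K \<and> L \<subseteq> K)}"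

datatype 'a fnode = Src | Snk | VN 'a | LN "'a set"

definition HV :: "('a \<Rightarrow> 'a \<Rightarrow> bool) \<Rightarrow> 'a set \<Rightarrow> nat \<Rightarrow> 'a fnode set" where
  "HV adj V h = {Src, Snk} \<union> VN ` V \<union> LN ` Lambda adj V h"

definition HE :: "('a \<Rightarrow> 'a \<Rightarrow> bool) \<Rightarrow> 'a set \<Rightarrow> nat \<Rightarrow> ('a fnode \<times> 'a fnode) set" where
  "HE adj V h =
     {(Src, VN v) | v. v \<in> V} \<union> {(VN v, Snk) | v. v \<in> V} \<union>
     {(VN v, Src) | v. v \<in> V} \<union> {(Snk, VN v) | v. v \<in> V} \<union>
     {(LN L, VN v) | L v. L \<in> Lambda adj V h \<and> v \<in> L} \<union>
     {(VN v, LN L) | L v. L \<in> Lambda adj V h \<and> v \<in> L} \<union>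
     {(VN v, LN L) | L v. L \<in> Lambda adj V h \<and> v \<in> V \<and> is_clique adj V h (insert v L)} \<union>
     {(LN L, VN v) | L v. L \<in> Lambda adj V h \<and> v \<in> V \<and> is_clique adj V h (insert v L)}"

text \<open>Capacities; pairs that are not arcs (and the reverse arcs) get capacity 0.\<close>
fun cap :: "('a \<Rightarrow> 'a \<Rightarrow> bool) \<Rightarrow> 'a set \<Rightarrow> nat \<Rightarrow> 'a fnode \<Rightarrow> 'a fnode \<Rightarrow> ereal" where
  "cap adj V h Src (VN v) = (if v \<in> V then ereal (real (clique_deg adj V h v)) else 0)"
| "cap adj V h (VN v) Snk = (if v \<in> V then ereal (real h * rho_star adj V h) else 0)"
| "cap adj V h (LN L) (VN v) = (if L \<in> Lambda adj V h \<and> v \<in> L then \<infinity> else 0)"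
| "cap adj V h (VN v) (LN L) =
     (if L \<in> Lambda adj V h \<and> v \<in> V \<and> is_clique adj V h (insert v L) then 1 else 0)"
| "cap adj V h _ _ = 0"

definition is_flow :: "('a \<Rightarrow> 'a \<Rightarrow> bool) \<Rightarrow> 'a set \<Rightarrow> nat \<Rightarrow> ('a fnode \<Rightarrow> 'a fnode \<Rightarrow> real) \<Rightarrow> bool" where
  "is_flow adj V h f \<longleftrightarrow>
     (\<forall>u\<in>HV adj V h. \<forall>w\<in>HV adj V h. ereal (f u w) \<le> cap adj V h u w) \<and>
     (\<forall>u\<in>HV adj V h. \<forall>w\<in>HV adj V h. f w u = - f u w) \<and>
     (\<forall>u\<in>HV adj V h - {Src, Snk}. (\<Sum>w\<in>HV adj V h. f u w) = 0)"

definition flow_value :: "('a \<Rightarrow> 'a \<Rightarrow> bool) \<Rightarrow> 'a set \<Rightarrow> nat \<Rightarrow> ('a fnode \<Rightarrow> 'a fnode \<Rightarrow> real) \<Rightarrow> real" where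
  "flow_value adj V h f = (\<Sum>v\<in>VN ` V. f Src v)"

definition is_max_flow :: "('a \<Rightarrow> 'a \<Rightarrow> bool) \<Rightarrow> 'a set \<Rightarrow> nat \<Rightarrow> ('a fnode \<Rightarrow> 'a fnode \<Rightarrow> real) \<Rightarrow> bool" where
  "is_max_flow adj V h f \<longleftrightarrow> is_flow adj V h f \<and>
     (\<forall>g. is_flow adj V h g \<longrightarrow> flow_value adj V h g \<le> flow_value adj V h f)"

definition residual :: "('a \<Rightarrow> 'a \<Rightarrow> bool) \<Rightarrow> 'a set \<Rightarrow> nat \<Rightarrow> ('a fnode \<Rightarrow> 'a fnode \<Rightarrow> real) \<Rightarrow> ('a fnode \<times> 'a fnode) set" where
  "residual adj V h f = {(u, w). (u, w) \<in> HE adj V h \<and> cap adj V h u w - ereal (f u w) > 0}"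

end

theory Submission
  imports Defs
begin

text \<open>Let \<open>T\<close> be the set of nodes reachable from \<open>t\<close> in the residual graph and \<open>U\<close> the rest.
  No residual arc enters \<open>U\<close>, so every arc from \<open>T\<close> into \<open>U\<close> is saturated and all flow between
  the two sides runs from \<open>T\<close> to \<open>U\<close>: the net outflow of \<open>U\<close> is nonpositive. If \<open>s \<in> U\<close>, that net
  outflow is the flow value, which is positive because the path \<open>s \<rightarrow> v \<rightarrow> t\<close> carries a flow.
  If \<open>s \<in> T\<close> and some \<open>v \<in> U\<close>, conservation makes the net outflow zero, but the saturated arc
  \<open>(s, v)\<close> contributes at least \<open>deg(v, h) \<ge> 1\<close> to the inflow of \<open>U\<close>.\<close>

definition net_out :: "('b \<Rightarrow> 'b \<Rightarrow> real) \<Rightarrow> 'b set \<Rightarrow> 'b set \<Rightarrow> real" where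
  "net_out f N U = (\<Sum>u\<in>U. \<Sum>w\<in>N. f u w)"

lemma sum_le_member_nonpos:
  fixes g :: "'b \<Rightarrow> real"
  assumes "finite A" "a \<in> A" "\<And>x. x \<in> A \<Longrightarrow> g x \<le> 0"
  shows "sum g A \<le> g a"
proof -
  have "sum g A = g a + sum g (A - {a})" using assms(1,2) by (rule sum.remove)
  moreover have "sum g (A - {a}) \<le> 0" using assms(3) by (intro sum_nonpos) blast
  ultimately show ?thesis by simp
qed

lemma sum_sum_antisym_eq_0:
  fixes f :: "'b \<Rightarrow> 'b \<Rightarrow> real"
  assumes "\<And>x y. x \<in> A \<Longrightarrow> y \<in> A \<Longrightarrow> f y x = - f x y"
  shows "(\<Sum>x\<in>A. \<Sum>y\<in>A. f x y) = 0"
proof -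
  have "(\<Sum>x\<in>A. \<Sum>y\<in>A. f x y) = (\<Sum>y\<in>A. \<Sum>x\<in>A. f x y)" by (rule sum.swap)
  also have "\<dots> = (\<Sum>y\<in>A. \<Sum>x\<in>A. - f y x)"
    using assms by (intro sum.cong refl) blast
  also have "\<dots> = - (\<Sum>y\<in>A. \<Sum>x\<in>A. f y x)" by (simp add: sum_negf)
  finally show ?thesis by simp
qed

lemma net_out_eq_cut_sum:
  assumes "finite N" "U \<subseteq> N" "\<And>x y. x \<in> N \<Longrightarrow> y \<in> N \<Longrightarrow> f y x = - f x y"
  shows "net_out f N U = (\<Sum>u\<in>U. \<Sum>w\<in>N - U. f u w)"
proof -
  have "net_out f N U = (\<Sum>u\<in>U. \<Sum>w\<in>U. f u w) + (\<Sum>u\<in>U. \<Sum>w\<in>N - U. f u w)"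
    unfolding net_out_def using assms(1,2) by (simp add: sum.subset_diff[of U N] sum.distrib)
  also have "(\<Sum>u\<in>U. \<Sum>w\<in>U. f u w) = 0"
    using assms(2,3) by (intro sum_sum_antisym_eq_0) blast
  finally show ?thesis by simp
qed

lemma net_out_le_cut_arc:
  assumes "finite N" "U \<subseteq> N" "\<And>x y. x \<in> N \<Longrightarrow> y \<in> N \<Longrightarrow> f y x = - f x y"
    and "\<And>u w. u \<in> U \<Longrightarrow> w \<in> N - U \<Longrightarrow> f u w \<le> 0"
    and "u\<^sub>0 \<in> U" "w\<^sub>0 \<in> N - U"
  shows "net_out f N U \<le> f u\<^sub>0 w\<^sub>0"
proof -
  have fin: "finite U" "finite (N - U)" using assms(1,2) finite_subset by auto
  have "net_out f N U = (\<Sum>u\<in>U. \<Sum>w\<in>N - U. f u w)"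
    using assms(1-3) by (rule net_out_eq_cut_sum)
  also have "\<dots> \<le> (\<Sum>w\<in>N - U. f u\<^sub>0 w)"
    using fin assms(4,5) by (intro sum_le_member_nonpos sum_nonpos) auto
  also have "\<dots> \<le> f u\<^sub>0 w\<^sub>0"
    using fin assms(4-6) by (intro sum_le_member_nonpos) auto
  finally show ?thesis .
qed

lemma finite_Lambda: "finite V \<Longrightarrow> finite (Lambda adj V h)"
  by (rule finite_subset[of _ "Pow V"]) (auto simp: Lambda_def is_clique_def)

lemma finite_HV: "finite V \<Longrightarrow> finite (HV adj V h)"
  by (simp add: HV_def finite_Lambda)

lemma clique_deg_pos:
  assumes "finite V" "is_clique adj V h K" "v \<in> K"
  shows "1 \<le> clique_deg adj V h v"
proof -
  have "finite {K. is_clique adj V h K \<and> v \<in> K}"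
    by (rule finite_subset[of _ "Pow V"]) (auto simp: is_clique_def assms(1))
  thus ?thesis using assms(2,3) by (auto simp: clique_deg_def Suc_le_eq card_gt_0_iff)
qed

lemma rho_le_rho_star:
  assumes "finite V" "W \<subseteq> V" "W \<noteq> {}"
  shows "rho adj h W \<le> rho_star adj V h"
proof -
  have "{rho adj h W | W. W \<subseteq> V \<and> W \<noteq> {}} = rho adj h ` {W. W \<subseteq> V \<and> W \<noteq> {}}" by blast
  hence "finite {rho adj h W | W. W \<subseteq> V \<and> W \<noteq> {}}" using assms(1) by simp
  thus ?thesis unfolding rho_star_def using assms(2,3) by (intro Max_ge) auto
qed

lemma rho_star_nonneg: "finite V \<Longrightarrow> V \<noteq> {} \<Longrightarrow> 0 \<le> rho_star adj V h"
  using rho_le_rho_star[of V V adj h] unfolding rho_def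
  by (meson divide_nonneg_nonneg of_nat_0_le_iff order_trans order_refl)

lemma rho_star_pos:
  assumes "finite V" "is_clique adj V h K" "0 < h"
  shows "0 < rho_star adj V h"
proof -
  have K: "K \<subseteq> V" "finite K" "card K = h" using assms(2) by (auto simp: is_clique_def)
  have "finite {K'. is_clique adj K h K'}"
    by (rule finite_subset[of _ "Pow K"]) (auto simp: is_clique_def K)
  moreover have "K \<in> {K'. is_clique adj K h K'}" using assms(2) by (simp add: is_clique_def)
  ultimately have "card {K'. is_clique adj K h K'} \<noteq> 0" by auto
  hence "0 < mu adj h K" by (simp add: mu_def)
  hence "0 < rho adj h K" using K assms(3) by (simp add: rho_def)
  also have "\<dots> \<le> rho_star adj V h"
    using K assms(1,3) by (intro rho_le_rho_star) auto
  finally show ?thesis .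
qed

lemma cap_nonneg: "0 \<le> rho_star adj V h \<Longrightarrow> 0 \<le> cap adj V h u w"
  by (cases u; cases w) auto

lemma HE_if_cap_nonzero: "cap adj V h u w \<noteq> 0 \<Longrightarrow> (u, w) \<in> HE adj V h"
  by (cases u; cases w) (auto simp: HE_def split: if_splits)

lemma HE_sym: "(u, w) \<in> HE adj V h \<Longrightarrow> (w, u) \<in> HE adj V h"
  unfolding HE_def by blast

lemma
  assumes "is_flow adj V h f" "u \<in> HV adj V h" "w \<in> HV adj V h"
  shows flow_le_cap: "ereal (f u w) \<le> cap adj V h u w"
    and flow_antisym: "f w u = - f u w"
  using assms unfolding is_flow_def by blast+

lemma flow_conserved:
  "is_flow adj V h f \<Longrightarrow> u \<in> HV adj V h - {Src, Snk} \<Longrightarrow> (\<Sum>w\<in>HV adj V h. f u w) = 0"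
  unfolding is_flow_def by blast

lemma flow_nonpos_if_cap_zero:
  assumes "is_flow adj V h f" "u \<in> HV adj V h" "w \<in> HV adj V h" "cap adj V h u w = 0"
  shows "f u w \<le> 0"
  using flow_le_cap[OF assms(1-3)] assms(4) by (simp add: zero_ereal_def)

lemma saturated_if_not_residual:
  assumes "(u, w) \<in> HE adj V h" "(u, w) \<notin> residual adj V h f"
  shows "cap adj V h u w \<le> ereal (f u w)"
  using assms by (cases "cap adj V h u w") (auto simp: residual_def)

text \<open>Off the arc set both capacities vanish, so the antisymmetric flow is zero there.\<close>
lemma flow_nonneg_if_not_residual:
  assumes "is_flow adj V h f" "0 \<le> rho_star adj V h"
    and "u \<in> HV adj V h" "w \<in> HV adj V h" "(u, w) \<notin> residual adj V h f"
  shows "0 \<le> f u w"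
proof (cases "(u, w) \<in> HE adj V h")
  case True
  hence "cap adj V h u w \<le> ereal (f u w)" using assms(5) by (rule saturated_if_not_residual)
  with cap_nonneg[OF assms(2)] have "0 \<le> ereal (f u w)" by (rule order_trans)
  thus ?thesis by simp
next
  case False
  hence "cap adj V h w u = 0" using HE_if_cap_nonzero HE_sym by blast
  hence "f w u \<le> 0" using assms(1,3,4) by (intro flow_nonpos_if_cap_zero)
  thus ?thesis using flow_antisym[OF assms(1,3,4)] by simp
qed

lemma flow_value_eq_out_Src:
  assumes "is_flow adj V h f" "finite V"
  shows "(\<Sum>w\<in>HV adj V h. f Src w) = flow_value adj V h f"
proof -
  have zero: "f Src w = 0" if w: "w \<in> HV adj V h - VN ` V" for w
  proof -
    have "cap adj V h Src w = 0" "cap adj V h w Src = 0"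
      using w by (cases w, auto)+
    moreover have HV: "Src \<in> HV adj V h" "w \<in> HV adj V h" using w by (auto simp: HV_def)
    ultimately have "f Src w \<le> 0" "f w Src \<le> 0"
      using flow_nonpos_if_cap_zero[OF assms(1)] by blast+
    thus ?thesis using flow_antisym[OF assms(1) HV] by simp
  qed
  have "VN ` V \<subseteq> HV adj V h" by (auto simp: HV_def)
  from sum.mono_neutral_right[OF finite_HV[OF assms(2)] this] zero
  show ?thesis unfolding flow_value_def by blast
qed

lemma net_out_flow:
  assumes "is_flow adj V h f" "finite V" "U \<subseteq> HV adj V h - {Snk}"
  shows "net_out f (HV adj V h) U = (if Src \<in> U then flow_value adj V h f else 0)"
proof -
  have conserved: "(\<Sum>u\<in>U - {Src}. \<Sum>w\<in>HV adj V h. f u w) = 0"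
  proof (rule sum.neutral)
    show "\<forall>u\<in>U - {Src}. (\<Sum>w\<in>HV adj V h. f u w) = 0"
      using assms(3) flow_conserved[OF assms(1)] by blast
  qed
  show ?thesis
  proof (cases "Src \<in> U")
    case True
    have "finite U" using assms(2,3) finite_HV finite_subset by blast
    from this True have "net_out f (HV adj V h) U
        = (\<Sum>w\<in>HV adj V h. f Src w) + (\<Sum>u\<in>U - {Src}. \<Sum>w\<in>HV adj V h. f u w)"
      unfolding net_out_def by (rule sum.remove)
    thus ?thesis using True conserved flow_value_eq_out_Src[OF assms(1,2)] by simp
  qed (use conserved in \<open>simp add: net_out_def\<close>)
qed

definition path_flow :: "'a \<Rightarrow> real \<Rightarrow> 'a fnode \<Rightarrow> 'a fnode \<Rightarrow> real" where
  "path_flow v \<epsilon> u w =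
     (if (u, w) = (Src, VN v) \<or> (u, w) = (VN v, Snk) then \<epsilon>
      else if (u, w) = (VN v, Src) \<or> (u, w) = (Snk, VN v) then - \<epsilon> else 0)"

lemma is_flow_path_flow:
  assumes "finite V" "v \<in> V" "0 \<le> \<epsilon>" "\<epsilon> \<le> real (clique_deg adj V h v)"
    and "\<epsilon> \<le> real h * rho_star adj V h"
  shows "is_flow adj V h (path_flow v \<epsilon>)"
  unfolding is_flow_def
proof (intro conjI ballI)
  fix u w
  consider "(u, w) = (Src, VN v)" | "(u, w) = (VN v, Snk)" | "path_flow v \<epsilon> u w \<le> 0"
    using assms(3) by (cases "(u, w) = (Src, VN v) \<or> (u, w) = (VN v, Snk)") (auto simp: path_flow_def)
  thus "ereal (path_flow v \<epsilon> u w) \<le> cap adj V h u w"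
  proof cases
    case 3
    hence "ereal (path_flow v \<epsilon> u w) \<le> 0" by simp
    also have "0 \<le> cap adj V h u w" using cap_nonneg rho_star_nonneg assms(1,2) by blast
    finally show ?thesis .
  qed (use assms(2,4,5) in \<open>auto simp: path_flow_def\<close>)
  show "path_flow v \<epsilon> w u = - path_flow v \<epsilon> u w" by (auto simp: path_flow_def)
next
  fix u assume u: "u \<in> HV adj V h - {Src, Snk}"
  have fin: "finite (HV adj V h)" using assms(1) by (rule finite_HV)
  have ends: "Src \<in> HV adj V h" "Snk \<in> HV adj V h" by (auto simp: HV_def)
  have "(\<Sum>w\<in>HV adj V h. path_flow v \<epsilon> u w) =
        (\<Sum>w\<in>HV adj V h. if u = VN v then (if w = Snk then \<epsilon> else 0) - (if w = Src then \<epsilon> else 0) else 0)"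
    using u by (intro sum.cong) (auto simp: path_flow_def)
  also have "\<dots> = 0" using fin ends by (cases "u = VN v") (simp_all add: sum_subtractf)
  finally show "(\<Sum>w\<in>HV adj V h. path_flow v \<epsilon> u w) = 0" .
qed

lemma flow_value_path_flow:
  assumes "finite V" "v \<in> V"
  shows "flow_value adj V h (path_flow v \<epsilon>) = \<epsilon>"
proof -
  have "flow_value adj V h (path_flow v \<epsilon>) = (\<Sum>x\<in>VN ` V. if x = VN v then \<epsilon> else 0)"
    unfolding flow_value_def by (intro sum.cong) (auto simp: path_flow_def)
  thus ?thesis using assms by simp
qed

lemma max_flow_value_pos:
  assumes "is_max_flow adj V h f" "finite V" "v \<in> V"
    and "1 \<le> clique_deg adj V h v" "0 < rho_star adj V h" "0 < h"
  shows "0 < flow_value adj V h f"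
proof -
  define \<epsilon> where "\<epsilon> = min 1 (real h * rho_star adj V h)"
  have "is_flow adj V h (path_flow v \<epsilon>)"
    using assms(2-6) by (intro is_flow_path_flow) (auto simp: \<epsilon>_def)
  hence "flow_value adj V h (path_flow v \<epsilon>) \<le> flow_value adj V h f"
    using assms(1) by (simp add: is_max_flow_def)
  moreover have "0 < \<epsilon>" using assms(5,6) by (simp add: \<epsilon>_def)
  ultimately show ?thesis using flow_value_path_flow[OF assms(2,3)] by simp
qed

definition unreachable_from_Snk ::
    "('a \<Rightarrow> 'a \<Rightarrow> bool) \<Rightarrow> 'a set \<Rightarrow> nat \<Rightarrow> ('a fnode \<Rightarrow> 'a fnode \<Rightarrow> real) \<Rightarrow> 'a fnode set" where
  "unreachable_from_Snk adj V h f = {x \<in> HV adj V h. (Snk, x) \<notin> (residual adj V h f)\<^sup>*}"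

lemma flow_from_unreachable_nonpos:
  assumes "is_flow adj V h f" "finite V" "V \<noteq> {}"
    and "u \<in> unreachable_from_Snk adj V h f" "w \<in> HV adj V h - unreachable_from_Snk adj V h f"
  shows "f u w \<le> 0"
proof -
  have uw: "u \<in> HV adj V h" "w \<in> HV adj V h" "(w, u) \<notin> residual adj V h f"
    using assms(4,5) by (auto simp: unreachable_from_Snk_def intro: rtrancl_into_rtrancl)
  hence "0 \<le> f w u"
    using assms(1-3) by (intro flow_nonneg_if_not_residual rho_star_nonneg) auto
  thus ?thesis using flow_antisym[OF assms(1) uw(1,2)] by simp
qed

lemma net_out_unreachable_le:
  assumes "is_flow adj V h f" "finite V" "V \<noteq> {}"
    and "u\<^sub>0 \<in> unreachable_from_Snk adj V h f" "w\<^sub>0 \<in> HV adj V h - unreachable_from_Snk adj V h f"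
  shows "net_out f (HV adj V h) (unreachable_from_Snk adj V h f) \<le> f u\<^sub>0 w\<^sub>0"
proof (rule net_out_le_cut_arc[OF finite_HV[OF assms(2)] _ _ _ assms(4,5)])
  show "unreachable_from_Snk adj V h f \<subseteq> HV adj V h" by (auto simp: unreachable_from_Snk_def)
  show "\<And>x y. x \<in> HV adj V h \<Longrightarrow> y \<in> HV adj V h \<Longrightarrow> f y x = - f x y"
    using flow_antisym[OF assms(1)] by blast
qed (rule flow_from_unreachable_nonpos[OF assms(1-3)])

theorem lemma5:
  fixes adj :: "'a \<Rightarrow> 'a \<Rightarrow> bool" and V :: "'a set" and h :: nat
    and f :: "'a fnode \<Rightarrow> 'a fnode \<Rightarrow> real"
  assumes "finite V"
    and "\<And>x y. adj x y \<Longrightarrow> adj y x"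
    and "\<And>x. \<not> adj x x"
    and "h \<ge> 2"
    and "\<forall>v\<in>V. \<exists>K. is_clique adj V h K \<and> v \<in> K"
    and "is_max_flow adj V h f"
  shows "\<forall>v\<in>V. (Snk, VN v) \<in> (residual adj V h f)\<^sup>+"
proof (rule ballI, rule ccontr)
  fix v assume v: "v \<in> V" "(Snk, VN v) \<notin> (residual adj V h f)\<^sup>+"
  define U where "U = unreachable_from_Snk adj V h f"
  obtain K where K: "is_clique adj V h K" "v \<in> K" using assms(5) v(1) by blast
  have deg: "1 \<le> clique_deg adj V h v" using clique_deg_pos[OF assms(1) K] .
  have rho: "0 < rho_star adj V h" using rho_star_pos[OF assms(1) K(1)] assms(4) by simp
  have flow: "is_flow adj V h f" using assms(6) by (simp add: is_max_flow_def)
  have vU: "VN v \<in> U" using v by (auto simp: U_def unreachable_from_Snk_def HV_def rtrancl_eq_or_trancl)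
  have SnkU: "Snk \<in> HV adj V h - U" by (simp add: U_def unreachable_from_Snk_def HV_def)
  have net: "net_out f (HV adj V h) U = (if Src \<in> U then flow_value adj V h f else 0)"
    using SnkU by (intro net_out_flow[OF flow assms(1)]) (auto simp: U_def unreachable_from_Snk_def)
  have "V \<noteq> {}" using v(1) by blast
  note cut = net_out_unreachable_le[OF flow assms(1) this, folded U_def]
    and out_of_U = flow_from_unreachable_nonpos[OF flow assms(1) this, folded U_def]
  show False
  proof (cases "Src \<in> U")
    case True
    have "0 < flow_value adj V h f"
      using max_flow_value_pos[OF assms(6,1) v(1) deg rho] assms(4) by simp
    thus False using net cut[OF vU SnkU] out_of_U[OF vU SnkU] True by simp
  next
    case False
    hence Src: "Src \<in> HV adj V h - U" by (simp add: HV_def)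
    hence "(Src, VN v) \<notin> residual adj V h f"
      using vU by (auto simp: U_def unreachable_from_Snk_def intro: rtrancl_into_rtrancl)
    hence "cap adj V h Src (VN v) \<le> ereal (f Src (VN v))"
      using v(1) by (intro saturated_if_not_residual) (auto simp: HE_def)
    hence "1 \<le> f Src (VN v)" using v(1) deg by simp
    moreover have "f (VN v) Src = - f Src (VN v)"
      using flow_antisym[OF flow, of Src "VN v"] v(1) by (simp add: HV_def)
    ultimately show False using net cut[OF vU Src] False by simp
  qed
qed

end
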